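(* Let $N\ge1$ clients; for each client $i$ let $x^i\in\mathbb{R}^d$ be a random feature vector with $\mathbb{E}[x^ix^{i\top}]=H$ (the same for all $i$), let $\varepsilon^i$ be a real random variable independent of $x^i$ with $\mathbb{E}[\varepsilon^i]=0$, $\mathbb{E}[(\varepsilon^i)^2]=\sigma^2$, and let $w_*^1,\dots,w_*^N\in\mathbb{R}^d$ with $w_*=\frac1N\sum_iw_*^i$. Assume there is $\kappa>0$ such that for all $i$ and all $z\in\mathbb{R}^d$, $\mathbb{E}[\langle z,x^i\rangle^4]\le\kappa\langle z,Hz\rangle^2$. Let $\Theta_i=\mathbb{E}[g_*^i(g_*^i)^\top]$ with $g_*^i=(x^ix^{i\top})(w_*-w_*^i)+x^i\varepsilon^i$, and let $W_*$ be uniform on $\{w_*^i:i\in\{1,\dots,N\}\}$, so $\mathrm{Cov}(W_* )=\frac1N\sum_i(w_*-w_*^i)(w_*-w_*^i)^\top$. Then $$\frac1N\sum_{i=1}^N\Theta_i\preccurlyeq\big(\kappa\,\mathrm{Tr}(H\,\mathrm{Cov}(W_* ))+\sigma^2\big)H.$$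
   Context: $A\preccurlyeq B$ means $B-A$ is positive semi-definite. *)

theory Defs
  imports "HOL-Analysis.Analysis" "HOL-Probability.Probability"
begin

definition outer :: "real^'d \<Rightarrow> real^'d \<Rightarrow> real^'d^'d" where
  "outer u v = (\<chi> i j. u $ i * v $ j)"

definition mat_expect :: "'a measure \<Rightarrow> ('a \<Rightarrow> real^'d^'d) \<Rightarrow> real^'d^'d" where
  "mat_expect M F = (\<chi> i j. integral\<^sup>L M (\<lambda>\<omega>. F \<omega> $ i $ j))"

definition psd :: "real^'d^'d \<Rightarrow> bool" where
  "psd A \<longleftrightarrow> (\<forall>v. 0 \<le> v \<bullet> (A *v v))"

definition loewner_le :: "real^'d^'d \<Rightarrow> real^'d^'d \<Rightarrow> bool" where
  "loewner_le A B \<longleftrightarrow> psd (B - A)"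

definition indep_rv :: "'a measure \<Rightarrow> ('a \<Rightarrow> 'b::topological_space) \<Rightarrow> ('a \<Rightarrow> 'c::topological_space) \<Rightarrow> bool" where
  "indep_rv M U V \<longleftrightarrow>
     (\<forall>A \<in> sets borel. \<forall>B \<in> sets borel.
        measure M (U -` A \<inter> V -` B \<inter> space M) = measure M (U -` A \<inter> space M) * measure M (V -` B \<inter> space M))"

end

theory Submission
  imports Defs
begin

(* Fix a client and write u = w_star - w^i, so that g = (<u,x> + eps) x. For a test vector v,
   v^T Theta v = E[<v,x>^2 (<u,x> + eps)^2] = E[<v,x>^2 <u,x>^2] + sigma^2 <v,Hv>,
   because independence and E[eps] = 0 kill the cross term and factor E[<v,x>^2 eps^2].
   Cauchy-Schwarz and the fourth-moment hypothesis bound E[<v,x>^2 <u,x>^2] by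
   kappa <u,Hu> <v,Hv>, i.e. Theta_i <= (kappa <u,Hu> + sigma^2) H. Averaging over the
   clients turns the mean of <u,Hu> into Tr(H Cov(W_star)). *)

lemma outer_mult_vec: "outer a b *v c = (b \<bullet> c) *\<^sub>R (a :: real^'d)"
  by (simp add: vec_eq_iff outer_def matrix_vector_mult_def inner_vec_def sum_distrib_left mult_ac)

lemma inner_outer_self_mult_vec: "v \<bullet> (outer a a *v v) = (v \<bullet> (a :: real^'d))\<^sup>2"
  by (simp add: outer_mult_vec power2_eq_square inner_commute)

lemma outer_nth: "outer a b $ j $ k = (axis j 1 \<bullet> a) * (axis k 1 \<bullet> (b :: real^'d))"
  by (simp add: outer_def inner_axis')

lemma loewner_le_iff_quadratic_form:
  "loewner_le A B \<longleftrightarrow> (\<forall>v. v \<bullet> (A *v v) \<le> v \<bullet> (B *v v))"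
  by (simp add: loewner_le_def psd_def matrix_vector_mult_diff_rdistrib inner_diff_right)

lemma trace_mult_scaled_sum_outer:
  fixes H :: "real^'d^'d"
  shows "trace (H ** (c *\<^sub>R (\<Sum>i\<in>I. outer (a i) (a i)))) = c * (\<Sum>i\<in>I. a i \<bullet> (H *v a i))"
proof -
  have "trace (H ** (c *\<^sub>R (\<Sum>i\<in>I. outer (a i) (a i)))) =
     (\<Sum>x\<in>UNIV. \<Sum>k\<in>UNIV. \<Sum>i\<in>I. c * (H $ x $ k * a i $ k * a i $ x))"
    by (simp add: trace_def matrix_matrix_mult_def outer_def sum_component sum_distrib_left mult_ac)
  also have "\<dots> = (\<Sum>i\<in>I. \<Sum>x\<in>UNIV. \<Sum>k\<in>UNIV. c * (H $ x $ k * a i $ k * a i $ x))"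
    by (simp add: sum.swap[of _ I])
  also have "\<dots> = c * (\<Sum>i\<in>I. a i \<bullet> (H *v a i))"
    by (simp add: inner_vec_def matrix_vector_mult_def sum_distrib_left mult_ac)
  finally show ?thesis .
qed

lemma sum_matrix_vector_mult:
  fixes A :: "'i \<Rightarrow> real^'n^'m"
  shows "(\<Sum>i\<in>I. A i) *v v = (\<Sum>i\<in>I. A i *v v)"
  by (induction I rule: infinite_finite_induct) (auto simp: matrix_vector_mult_add_rdistrib)

lemma loewner_le_average:
  fixes A :: "'i \<Rightarrow> real^'d^'d"
  assumes "\<And>i. i \<in> I \<Longrightarrow> loewner_le (A i) (c i *\<^sub>R B)"
  shows "loewner_le ((1 / real (card I)) *\<^sub>R (\<Sum>i\<in>I. A i))
                    (((1 / real (card I)) * (\<Sum>i\<in>I. c i)) *\<^sub>R B)"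
  unfolding loewner_le_iff_quadratic_form
proof
  fix v :: "real^'d"
  have "(\<Sum>i\<in>I. v \<bullet> (A i *v v)) \<le> (\<Sum>i\<in>I. c i * (v \<bullet> (B *v v)))"
    using assms by (intro sum_mono) (simp add: loewner_le_iff_quadratic_form flip: scaleR_matrix_vector_assoc)
  then show "v \<bullet> ((1 / real (card I)) *\<^sub>R (\<Sum>i\<in>I. A i) *v v)
      \<le> v \<bullet> (((1 / real (card I)) * (\<Sum>i\<in>I. c i)) *\<^sub>R B *v v)"
    by (simp add: sum_matrix_vector_mult inner_sum_right sum_distrib_right divide_right_mono
        flip: scaleR_matrix_vector_assoc)
qed

lemma inner_mat_expect_mult_vec:
  fixes v :: "real^'d"
  assumes "\<And>j k. integrable M (\<lambda>\<omega>. F \<omega> $ j $ k)"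
  shows "v \<bullet> (mat_expect M F *v v) = (\<integral>\<omega>. v \<bullet> (F \<omega> *v v) \<partial>M)"
  using assms
  by (simp add: mat_expect_def inner_vec_def matrix_vector_mult_def sum_distrib_left mult_ac)

lemma abs_prod_list_le_power:
  fixes f :: "'b \<Rightarrow> real"
  assumes "\<And>z. z \<in> set zs \<Longrightarrow> \<bar>f z\<bar> \<le> m"
  shows "\<bar>\<Prod>z\<leftarrow>zs. f z\<bar> \<le> m ^ length zs"
  using assms by (induction zs) (auto simp: abs_mult intro!: mult_mono order_trans[OF abs_ge_zero])

lemma abs_prod_list_le_fourth_powers:
  fixes f :: "'b \<Rightarrow> real"
  assumes "length zs \<le> 4"
  shows "\<bar>\<Prod>z\<leftarrow>zs. f z\<bar> \<le> 1 + (\<Sum>z\<in>set zs. f z ^ 4)"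
proof -
  define m where "m = Max (insert 1 ((\<lambda>z. \<bar>f z\<bar>) ` set zs))"
  have m: "1 \<le> m" "\<And>z. z \<in> set zs \<Longrightarrow> \<bar>f z\<bar> \<le> m"
    by (simp_all add: m_def)
  have "\<bar>\<Prod>z\<leftarrow>zs. f z\<bar> \<le> m ^ length zs"
    using m(2) by (rule abs_prod_list_le_power)
  also have "\<dots> \<le> m ^ 4"
    by (rule power_increasing[OF assms m(1)])
  also have "\<dots> \<le> 1 + (\<Sum>z\<in>set zs. f z ^ 4)"
  proof (cases "m = 1")
    case False
    then obtain z where z: "z \<in> set zs" "m = \<bar>f z\<bar>"
      using Max_in[of "insert 1 ((\<lambda>z. \<bar>f z\<bar>) ` set zs)"] by (auto simp: m_def)
    have "m ^ 4 = f z ^ 4"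
      by (simp add: z(2) power_abs)
    also have "\<dots> \<le> (\<Sum>z\<in>set zs. f z ^ 4)"
      using z(1) by (intro member_le_sum) (simp_all add: zero_le_even_power)
    finally show ?thesis by simp
  qed (simp add: sum_nonneg zero_le_even_power)
  finally show ?thesis .
qed

lemma Cauchy_Schwarz_integral:
  fixes f g :: "'a \<Rightarrow> real"
  assumes [measurable]: "f \<in> borel_measurable M" "g \<in> borel_measurable M"
    and nonneg: "\<And>x. 0 \<le> f x" "\<And>x. 0 \<le> g x"
    and int: "integrable M (\<lambda>x. f x * g x)" "integrable M (\<lambda>x. f x ^ 2)" "integrable M (\<lambda>x. g x ^ 2)"
  shows "(\<integral>x. f x * g x \<partial>M)\<^sup>2 \<le> (\<integral>x. f x ^ 2 \<partial>M) * (\<integral>x. g x ^ 2 \<partial>M)"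
proof -
  have nn: "(\<integral>\<^sup>+x. ennreal (h x) \<partial>M) = ennreal (\<integral>x. h x \<partial>M)"
    if "integrable M h" "\<And>x. 0 \<le> h x" for h
    using that by (intro nn_integral_eq_integral) auto
  have "(\<integral>\<^sup>+x. ennreal (f x) * ennreal (g x) \<partial>M) = ennreal (\<integral>x. f x * g x \<partial>M)"
    using nn[OF int(1)] nonneg by (simp add: ennreal_mult[symmetric])
  then have "ennreal ((\<integral>x. f x * g x \<partial>M)\<^sup>2) = (\<integral>\<^sup>+x. ennreal (f x) * ennreal (g x) \<partial>M)\<^sup>2"
    using nonneg by (simp add: ennreal_power)
  also have "\<dots> \<le> (\<integral>\<^sup>+x. ennreal (f x) ^ 2 \<partial>M) * (\<integral>\<^sup>+x. ennreal (g x) ^ 2 \<partial>M)"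
    by (rule Cauchy_Schwarz_nn_integral) auto
  also have "\<dots> = ennreal ((\<integral>x. f x ^ 2 \<partial>M) * (\<integral>x. g x ^ 2 \<partial>M))"
    using nonneg by (simp add: nn[OF int(2)] nn[OF int(3)] ennreal_power ennreal_mult)
  finally show ?thesis
    by (simp add: ennreal_le_iff)
qed

lemma (in prob_space) indep_rv_imp_indep_var_compose:
  fixes f :: "'b::topological_space \<Rightarrow> 'e::topological_space"
    and g :: "'c::topological_space \<Rightarrow> 'e"
  assumes [measurable]: "X \<in> borel_measurable M" "Y \<in> borel_measurable M"
    "f \<in> borel_measurable borel" "g \<in> borel_measurable borel"
    and indep: "indep_rv M X Y"
  shows "indep_var borel (\<lambda>\<omega>. f (X \<omega>)) borel (\<lambda>\<omega>. g (Y \<omega>))"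
proof -
  let ?\<sigma> = "\<lambda>Z. {Z -` A \<inter> space M | A. A \<in> sets (borel :: 'e measure)}"
  have stable: "Int_stable (?\<sigma> Z)" for Z
    unfolding Int_stable_def by clarify (rule_tac x="A \<inter> Aa" in exI, auto)
  have "indep_set (?\<sigma> (\<lambda>\<omega>. f (X \<omega>))) (?\<sigma> (\<lambda>\<omega>. g (Y \<omega>)))"
  proof (unfold indep_sets2_eq, safe)
    fix A B :: "'e set" assume "A \<in> sets borel" "B \<in> sets borel"
    then have "f -` A \<in> sets borel" "g -` B \<in> sets borel"
      using measurable_sets_borel[OF assms(3)] measurable_sets_borel[OF assms(4)] by auto
    moreover have "(\<lambda>\<omega>. f (X \<omega>)) -` A = X -` (f -` A)" "(\<lambda>\<omega>. g (Y \<omega>)) -` B = Y -` (g -` B)"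
      by auto
    moreover have "(X -` A' \<inter> space M) \<inter> (Y -` B' \<inter> space M) = X -` A' \<inter> Y -` B' \<inter> space M" for A' B'
      by auto
    ultimately show "prob ((\<lambda>\<omega>. f (X \<omega>)) -` A \<inter> space M \<inter> ((\<lambda>\<omega>. g (Y \<omega>)) -` B \<inter> space M)) =
       prob ((\<lambda>\<omega>. f (X \<omega>)) -` A \<inter> space M) * prob ((\<lambda>\<omega>. g (Y \<omega>)) -` B \<inter> space M)"
      using indep unfolding indep_rv_def by simp
  qed auto
  then have "indep_set (sigma_sets (space M) (?\<sigma> (\<lambda>\<omega>. f (X \<omega>)))) (sigma_sets (space M) (?\<sigma> (\<lambda>\<omega>. g (Y \<omega>))))"
    by (rule indep_set_sigma_sets[OF _ stable stable])
  then show ?thesis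
    by (simp add: indep_var_eq)
qed

locale fourth_moment_features = prob_space M for M :: "'a measure" +
  fixes X :: "'a \<Rightarrow> real^'d"
  assumes X_measurable [measurable]: "X \<in> borel_measurable M"
    and integrable_inner_fourth: "\<And>z. integrable M (\<lambda>\<omega>. (z \<bullet> X \<omega>) ^ 4)"
begin

lemma integrable_prod_list_inner:
  assumes "length zs \<le> 4"
  shows "integrable M (\<lambda>\<omega>. \<Prod>z\<leftarrow>zs. z \<bullet> X \<omega>)"
proof (rule Bochner_Integration.integrable_bound)
  show "integrable M (\<lambda>\<omega>. 1 + (\<Sum>z\<in>set zs. (z \<bullet> X \<omega>) ^ 4))"
    by (intro Bochner_Integration.integrable_add Bochner_Integration.integrable_sum
        integrable_inner_fourth) simp
  show "(\<lambda>\<omega>. \<Prod>z\<leftarrow>zs. z \<bullet> X \<omega>) \<in> borel_measurable M"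
    by (induction zs) auto
  have "0 \<le> 1 + (\<Sum>z\<in>set zs. (z \<bullet> X \<omega>) ^ 4)" for \<omega>
    by (intro add_nonneg_nonneg sum_nonneg) (simp_all add: zero_le_even_power)
  then show "AE \<omega> in M. norm (\<Prod>z\<leftarrow>zs. z \<bullet> X \<omega>) \<le> norm (1 + (\<Sum>z\<in>set zs. (z \<bullet> X \<omega>) ^ 4))"
    using abs_prod_list_le_fourth_powers[OF assms] by (intro AE_I2) simp
qed

lemma integrable_outer_features: "integrable M (\<lambda>\<omega>. outer (X \<omega>) (X \<omega>) $ j $ k)"
  using integrable_prod_list_inner[of "[axis j 1, axis k 1]"] by (simp add: outer_nth)

lemma inner_second_moment_mult_vec:
  "v \<bullet> (mat_expect M (\<lambda>\<omega>. outer (X \<omega>) (X \<omega>)) *v v) = (\<integral>\<omega>. (v \<bullet> X \<omega>)\<^sup>2 \<partial>M)"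
  by (simp add: inner_mat_expect_mult_vec integrable_outer_features inner_outer_self_mult_vec)

lemma integral_square_mult_square_le:
  "(\<integral>\<omega>. (v \<bullet> X \<omega>)\<^sup>2 * (u \<bullet> X \<omega>)\<^sup>2 \<partial>M)\<^sup>2
     \<le> (\<integral>\<omega>. (v \<bullet> X \<omega>) ^ 4 \<partial>M) * (\<integral>\<omega>. (u \<bullet> X \<omega>) ^ 4 \<partial>M)"
  using Cauchy_Schwarz_integral[of "\<lambda>\<omega>. (v \<bullet> X \<omega>)\<^sup>2" M "\<lambda>\<omega>. (u \<bullet> X \<omega>)\<^sup>2"]
    integrable_prod_list_inner[of "[v, v, u, u]"] integrable_inner_fourth
  by (simp add: power2_eq_square power4_eq_xxxx mult_ac)

end

locale independent_noise = fourth_moment_features +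
  fixes e :: "'a \<Rightarrow> real"
  assumes e_measurable [measurable]: "e \<in> borel_measurable M"
    and indep_features_noise: "indep_rv M X e"
    and integrable_noise_square: "integrable M (\<lambda>\<omega>. (e \<omega>)\<^sup>2)"
    and noise_mean_zero: "(\<integral>\<omega>. e \<omega> \<partial>M) = 0"
begin

lemma integrable_noise: "integrable M e"
  by (rule square_integrable_imp_integrable[OF e_measurable integrable_noise_square])

lemma
  fixes g :: "real \<Rightarrow> real"
  assumes "f \<in> borel_measurable borel" "g \<in> borel_measurable borel"
    and "integrable M (\<lambda>\<omega>. f (X \<omega>))" "integrable M (\<lambda>\<omega>. g (e \<omega>))"
  shows integrable_features_mult_noise: "integrable M (\<lambda>\<omega>. f (X \<omega>) * g (e \<omega>))"
    and integral_features_mult_noise: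
      "(\<integral>\<omega>. f (X \<omega>) * g (e \<omega>) \<partial>M) = (\<integral>\<omega>. f (X \<omega>) \<partial>M) * (\<integral>\<omega>. g (e \<omega>) \<partial>M)"
  using indep_rv_imp_indep_var_compose[OF X_measurable e_measurable assms(1,2) indep_features_noise]
  by (simp_all add: indep_var_integrable indep_var_lebesgue_integral assms(3,4))

lemma
  shows integrable_cubic_mult_noise:
      "integrable M (\<lambda>\<omega>. (a \<bullet> X \<omega>) * (b \<bullet> X \<omega>) * (c \<bullet> X \<omega>) * e \<omega>)"
    and integral_cubic_mult_noise:
      "(\<integral>\<omega>. (a \<bullet> X \<omega>) * (b \<bullet> X \<omega>) * (c \<bullet> X \<omega>) * e \<omega> \<partial>M) = 0"
proof -
  have "integrable M (\<lambda>\<omega>. (a \<bullet> X \<omega>) * (b \<bullet> X \<omega>) * (c \<bullet> X \<omega>))"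
    using integrable_prod_list_inner[of "[a, b, c]"] by (simp add: mult_ac)
  note * = this integrable_noise
  show "integrable M (\<lambda>\<omega>. (a \<bullet> X \<omega>) * (b \<bullet> X \<omega>) * (c \<bullet> X \<omega>) * e \<omega>)"
    by (rule integrable_features_mult_noise[where f="\<lambda>x. (a \<bullet> x) * (b \<bullet> x) * (c \<bullet> x)"
          and g="\<lambda>t. t", OF _ _ *]) measurable
  show "(\<integral>\<omega>. (a \<bullet> X \<omega>) * (b \<bullet> X \<omega>) * (c \<bullet> X \<omega>) * e \<omega> \<partial>M) = 0"
    by (subst integral_features_mult_noise[where f="\<lambda>x. (a \<bullet> x) * (b \<bullet> x) * (c \<bullet> x)"
          and g="\<lambda>t. t", OF _ _ *]) (simp_all add: noise_mean_zero)
qed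

lemma
  shows integrable_quadratic_mult_noise_square:
      "integrable M (\<lambda>\<omega>. (a \<bullet> X \<omega>) * (b \<bullet> X \<omega>) * (e \<omega>)\<^sup>2)"
    and integral_quadratic_mult_noise_square:
      "(\<integral>\<omega>. (a \<bullet> X \<omega>) * (b \<bullet> X \<omega>) * (e \<omega>)\<^sup>2 \<partial>M)
         = (\<integral>\<omega>. (a \<bullet> X \<omega>) * (b \<bullet> X \<omega>) \<partial>M) * (\<integral>\<omega>. (e \<omega>)\<^sup>2 \<partial>M)"
proof -
  have "integrable M (\<lambda>\<omega>. (a \<bullet> X \<omega>) * (b \<bullet> X \<omega>))"
    using integrable_prod_list_inner[of "[a, b]"] by simp
  note * = this integrable_noise_square
  show "integrable M (\<lambda>\<omega>. (a \<bullet> X \<omega>) * (b \<bullet> X \<omega>) * (e \<omega>)\<^sup>2)"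
    by (rule integrable_features_mult_noise[where f="\<lambda>x. (a \<bullet> x) * (b \<bullet> x)"
          and g="\<lambda>t. t\<^sup>2", OF _ _ *]) measurable
  show "(\<integral>\<omega>. (a \<bullet> X \<omega>) * (b \<bullet> X \<omega>) * (e \<omega>)\<^sup>2 \<partial>M)
         = (\<integral>\<omega>. (a \<bullet> X \<omega>) * (b \<bullet> X \<omega>) \<partial>M) * (\<integral>\<omega>. (e \<omega>)\<^sup>2 \<partial>M)"
    by (rule integral_features_mult_noise[where f="\<lambda>x. (a \<bullet> x) * (b \<bullet> x)"
          and g="\<lambda>t. t\<^sup>2", OF _ _ *]) measurable
qed

lemma
  fixes u a b
  defines "G \<equiv> \<lambda>\<omega>. (u \<bullet> X \<omega> + e \<omega>) *\<^sub>R X \<omega>"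
  shows integrable_inner_gradient_mult:
      "integrable M (\<lambda>\<omega>. (a \<bullet> G \<omega>) * (b \<bullet> G \<omega>))"
    and integral_inner_gradient_mult:
      "(\<integral>\<omega>. (a \<bullet> G \<omega>) * (b \<bullet> G \<omega>) \<partial>M)
         = (\<integral>\<omega>. (u \<bullet> X \<omega>)\<^sup>2 * ((a \<bullet> X \<omega>) * (b \<bullet> X \<omega>)) \<partial>M)
           + (\<integral>\<omega>. (a \<bullet> X \<omega>) * (b \<bullet> X \<omega>) \<partial>M) * (\<integral>\<omega>. (e \<omega>)\<^sup>2 \<partial>M)"
proof -
  have expand: "(\<lambda>\<omega>. (a \<bullet> G \<omega>) * (b \<bullet> G \<omega>)) = (\<lambda>\<omega>.
      (u \<bullet> X \<omega>)\<^sup>2 * ((a \<bullet> X \<omega>) * (b \<bullet> X \<omega>))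
      + 2 * ((u \<bullet> X \<omega>) * (a \<bullet> X \<omega>) * (b \<bullet> X \<omega>) * e \<omega>)
      + (a \<bullet> X \<omega>) * (b \<bullet> X \<omega>) * (e \<omega>)\<^sup>2)"
    by (simp add: G_def fun_eq_iff power2_eq_square algebra_simps)
  have quartic: "integrable M (\<lambda>\<omega>. (u \<bullet> X \<omega>)\<^sup>2 * ((a \<bullet> X \<omega>) * (b \<bullet> X \<omega>)))"
    using integrable_prod_list_inner[of "[u, u, a, b]"] by (simp add: power2_eq_square mult_ac)
  note integrable = quartic integrable_cubic_mult_noise integrable_quadratic_mult_noise_square
  show "integrable M (\<lambda>\<omega>. (a \<bullet> G \<omega>) * (b \<bullet> G \<omega>))"
    unfolding expand
    by (intro Bochner_Integration.integrable_add Bochner_Integration.integrable_mult_right integrable)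
  show "(\<integral>\<omega>. (a \<bullet> G \<omega>) * (b \<bullet> G \<omega>) \<partial>M)
         = (\<integral>\<omega>. (u \<bullet> X \<omega>)\<^sup>2 * ((a \<bullet> X \<omega>) * (b \<bullet> X \<omega>)) \<partial>M)
           + (\<integral>\<omega>. (a \<bullet> X \<omega>) * (b \<bullet> X \<omega>) \<partial>M) * (\<integral>\<omega>. (e \<omega>)\<^sup>2 \<partial>M)"
    unfolding expand
    by (subst Bochner_Integration.integral_add Bochner_Integration.integral_mult_right,
        (intro Bochner_Integration.integrable_add Bochner_Integration.integrable_mult_right integrable)+)+
      (simp add: integral_cubic_mult_noise integral_quadratic_mult_noise_square)
qed

lemma inner_gradient_covariance_mult_vec:
  "v \<bullet> (mat_expect M (\<lambda>\<omega>. outer (outer (X \<omega>) (X \<omega>) *v u + e \<omega> *\<^sub>R X \<omega>)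
                                   (outer (X \<omega>) (X \<omega>) *v u + e \<omega> *\<^sub>R X \<omega>)) *v v)
     = (\<integral>\<omega>. (v \<bullet> X \<omega>)\<^sup>2 * (u \<bullet> X \<omega>)\<^sup>2 \<partial>M)
       + (\<integral>\<omega>. (v \<bullet> X \<omega>)\<^sup>2 \<partial>M) * (\<integral>\<omega>. (e \<omega>)\<^sup>2 \<partial>M)"
proof -
  have gradient: "outer (X \<omega>) (X \<omega>) *v u + e \<omega> *\<^sub>R X \<omega> = (u \<bullet> X \<omega> + e \<omega>) *\<^sub>R X \<omega>" for \<omega>
    by (simp add: outer_mult_vec scaleR_add_left inner_commute)
  let ?G = "\<lambda>\<omega>. (u \<bullet> X \<omega> + e \<omega>) *\<^sub>R X \<omega>"
  have "integrable M (\<lambda>\<omega>. outer (?G \<omega>) (?G \<omega>) $ j $ k)" for j k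
    unfolding outer_nth by (rule integrable_inner_gradient_mult)
  then have "v \<bullet> (mat_expect M (\<lambda>\<omega>. outer (?G \<omega>) (?G \<omega>)) *v v) = (\<integral>\<omega>. (v \<bullet> ?G \<omega>) * (v \<bullet> ?G \<omega>) \<partial>M)"
    by (simp add: inner_mat_expect_mult_vec inner_outer_self_mult_vec power2_eq_square)
  also have "\<dots> = (\<integral>\<omega>. (v \<bullet> X \<omega>)\<^sup>2 * (u \<bullet> X \<omega>)\<^sup>2 \<partial>M)
       + (\<integral>\<omega>. (v \<bullet> X \<omega>)\<^sup>2 \<partial>M) * (\<integral>\<omega>. (e \<omega>)\<^sup>2 \<partial>M)"
    unfolding integral_inner_gradient_mult by (simp add: power2_eq_square mult_ac)
  finally show ?thesis
    by (simp only: gradient)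
qed

lemma inner_gradient_covariance_mult_vec_le:
  assumes "0 \<le> \<kappa>"
    and fourth: "\<And>z. (\<integral>\<omega>. (z \<bullet> X \<omega>) ^ 4 \<partial>M) \<le> \<kappa> * (\<integral>\<omega>. (z \<bullet> X \<omega>)\<^sup>2 \<partial>M)\<^sup>2"
  shows "v \<bullet> (mat_expect M (\<lambda>\<omega>. outer (outer (X \<omega>) (X \<omega>) *v u + e \<omega> *\<^sub>R X \<omega>)
                                   (outer (X \<omega>) (X \<omega>) *v u + e \<omega> *\<^sub>R X \<omega>)) *v v)
     \<le> (\<kappa> * (\<integral>\<omega>. (u \<bullet> X \<omega>)\<^sup>2 \<partial>M) + (\<integral>\<omega>. (e \<omega>)\<^sup>2 \<partial>M)) * (\<integral>\<omega>. (v \<bullet> X \<omega>)\<^sup>2 \<partial>M)"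
proof -
  define \<alpha> where "\<alpha> = (\<integral>\<omega>. (v \<bullet> X \<omega>)\<^sup>2 \<partial>M)"
  define \<beta> where "\<beta> = (\<integral>\<omega>. (u \<bullet> X \<omega>)\<^sup>2 \<partial>M)"
  have "0 \<le> \<alpha>" "0 \<le> \<beta>"
    by (simp_all add: \<alpha>_def \<beta>_def)
  have "(\<integral>\<omega>. (v \<bullet> X \<omega>)\<^sup>2 * (u \<bullet> X \<omega>)\<^sup>2 \<partial>M)\<^sup>2
      \<le> (\<integral>\<omega>. (v \<bullet> X \<omega>) ^ 4 \<partial>M) * (\<integral>\<omega>. (u \<bullet> X \<omega>) ^ 4 \<partial>M)"
    by (rule integral_square_mult_square_le)
  also have "\<dots> \<le> (\<kappa> * \<alpha>\<^sup>2) * (\<kappa> * \<beta>\<^sup>2)"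
    using fourth[of v] fourth[of u] \<open>0 \<le> \<kappa>\<close>
    by (intro mult_mono) (simp_all add: \<alpha>_def \<beta>_def zero_le_even_power)
  also have "\<dots> = (\<kappa> * \<alpha> * \<beta>)\<^sup>2"
    by (simp add: power2_eq_square mult_ac)
  finally have "(\<integral>\<omega>. (v \<bullet> X \<omega>)\<^sup>2 * (u \<bullet> X \<omega>)\<^sup>2 \<partial>M) \<le> \<kappa> * \<alpha> * \<beta>"
    by (rule power2_le_imp_le) (simp add: \<open>0 \<le> \<kappa>\<close> \<open>0 \<le> \<alpha>\<close> \<open>0 \<le> \<beta>\<close>)
  then show ?thesis
    unfolding inner_gradient_covariance_mult_vec \<alpha>_def[symmetric] \<beta>_def[symmetric]
    by (simp add: algebra_simps)
qed

end

theorem proposition5: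
  fixes N :: nat
    and M :: "nat \<Rightarrow> 'a measure"
    and X :: "nat \<Rightarrow> 'a \<Rightarrow> real^'d"
    and eps :: "nat \<Rightarrow> 'a \<Rightarrow> real"
    and H :: "real^'d^'d"
    and \<sigma> \<kappa> :: real
    and w :: "nat \<Rightarrow> real^'d"
  assumes N: "N \<ge> 1"
    and prob: "\<And>i. i \<in> {1..N} \<Longrightarrow> prob_space (M i)"
    and X_meas: "\<And>i. i \<in> {1..N} \<Longrightarrow> X i \<in> borel_measurable (M i)"
    and eps_meas: "\<And>i. i \<in> {1..N} \<Longrightarrow> eps i \<in> borel_measurable (M i)"
    and indep: "\<And>i. i \<in> {1..N} \<Longrightarrow> indep_rv (M i) (X i) (eps i)"
    and H: "\<And>i. i \<in> {1..N} \<Longrightarrow> mat_expect (M i) (\<lambda>\<omega>. outer (X i \<omega>) (X i \<omega>)) = H"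
    and eps_sq_int: "\<And>i. i \<in> {1..N} \<Longrightarrow> integrable (M i) (\<lambda>\<omega>. (eps i \<omega>)\<^sup>2)"
    and eps_mean: "\<And>i. i \<in> {1..N} \<Longrightarrow> integral\<^sup>L (M i) (eps i) = 0"
    and eps_var: "\<And>i. i \<in> {1..N} \<Longrightarrow> integral\<^sup>L (M i) (\<lambda>\<omega>. (eps i \<omega>)\<^sup>2) = \<sigma>\<^sup>2"
    and kappa_pos: "\<kappa> > 0"
    and fourth_int: "\<And>i z. i \<in> {1..N} \<Longrightarrow> integrable (M i) (\<lambda>\<omega>. (z \<bullet> X i \<omega>) ^ 4)"
    and fourth: "\<And>i z. i \<in> {1..N} \<Longrightarrow>
        integral\<^sup>L (M i) (\<lambda>\<omega>. (z \<bullet> X i \<omega>) ^ 4) \<le> \<kappa> * (z \<bullet> (H *v z))\<^sup>2"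
  shows "let wstar = (1 / real N) *\<^sub>R (\<Sum>i=1..N. w i);
             g = (\<lambda>i \<omega>. outer (X i \<omega>) (X i \<omega>) *v (wstar - w i) + eps i \<omega> *\<^sub>R X i \<omega>);
             \<Theta> = (\<lambda>i. mat_expect (M i) (\<lambda>\<omega>. outer (g i \<omega>) (g i \<omega>)));
             CovW = (1 / real N) *\<^sub>R (\<Sum>i=1..N. outer (wstar - w i) (wstar - w i))
         in loewner_le ((1 / real N) *\<^sub>R (\<Sum>i=1..N. \<Theta> i))
                       ((\<kappa> * trace (H ** CovW) + \<sigma>\<^sup>2) *\<^sub>R H)"
proof -
  define wstar where "wstar = (1 / real N) *\<^sub>R (\<Sum>i=1..N. w i)"
  define \<Theta> where "\<Theta> i = mat_expect (M i) (\<lambda>\<omega>.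
      outer (outer (X i \<omega>) (X i \<omega>) *v (wstar - w i) + eps i \<omega> *\<^sub>R X i \<omega>)
            (outer (X i \<omega>) (X i \<omega>) *v (wstar - w i) + eps i \<omega> *\<^sub>R X i \<omega>))" for i
  define \<beta> where "\<beta> i = (wstar - w i) \<bullet> (H *v (wstar - w i))" for i
  have client: "loewner_le (\<Theta> i) ((\<kappa> * \<beta> i + \<sigma>\<^sup>2) *\<^sub>R H)" if i: "i \<in> {1..N}" for i
  proof -
    interpret independent_noise "M i" "X i" "eps i"
      using prob[OF i] X_meas[OF i] fourth_int[OF i] eps_meas[OF i] indep[OF i] eps_sq_int[OF i] eps_mean[OF i]
      by (simp add: independent_noise_def independent_noise_axioms_def
          fourth_moment_features_def fourth_moment_features_axioms_def)
    have second_moment: "(\<integral>\<omega>. (z \<bullet> X i \<omega>)\<^sup>2 \<partial>M i) = z \<bullet> (H *v z)" for z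
      using inner_second_moment_mult_vec[of z] by (simp add: H[OF i])
    show ?thesis
      using inner_gradient_covariance_mult_vec_le[of \<kappa>] kappa_pos fourth[OF i]
      by (simp add: loewner_le_iff_quadratic_form second_moment eps_var[OF i] \<Theta>_def \<beta>_def
          flip: scaleR_matrix_vector_assoc)
  qed
  have "(1 / real N) * (\<Sum>i=1..N. \<kappa> * \<beta> i + \<sigma>\<^sup>2)
      = \<kappa> * trace (H ** ((1 / real N) *\<^sub>R (\<Sum>i=1..N. outer (wstar - w i) (wstar - w i)))) + \<sigma>\<^sup>2"
    using N by (simp add: trace_mult_scaled_sum_outer \<beta>_def sum.distrib sum_distrib_left field_simps)
  then show ?thesis
    unfolding Let_def wstar_def[symmetric] \<Theta>_def[symmetric]
    using loewner_le_average[of "{1..N}" \<Theta>, OF client] by simp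
qed

end
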